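(* Assume that the distribution of $Z$ is aperiodic (the greatest common divisor of its support is $1$), that $\mathbb{E} Z=\infty$ and that $\mathbb{E}\min(Z,W)<\infty$. Then $\mathbb{E}[J_n]\to\infty$ as $n\to\infty$.
   Context: Let $Z,W,(Z_n)_{n\ge1},(W_n)_{n\ge1}$ be independent, identically distributed random variables taking values in $\mathbb{N}=\{1,2,3,\dots\}$. Define the shortest-edge chain $S_n=\{n\}$ for $n\le 0$ and $S_n=\{n\}\cup S_{n-\min(Z_n,W_n)}$ for $n\ge1$. For $n\ge1$ let $J_n=\sum_{m=1}^n \mathbb{1}_{\{m\in S_n\}}\mathbb{1}_{\{\max(Z_m,W_m)\ge m\}}$ (the number of vertices of $S_n$ with positive index whose longer outgoing edge reaches a non-positive integer). *)

theory Defs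
  imports "HOL-Probability.Probability"
begin

text \<open>Shortest-edge chain for a fixed realisation z, w of the sequences (Z_n), (W_n):
  S_n = {n} for n \<le> 0 and S_n = {n} \<union> S_(n - min(z n, w n)) for n \<ge> 1.
  The extra guard (min = 0) only serves to make the recursion total; it never
  applies when the values are in {1,2,...}.\<close>

function shortest_chain :: "(nat \<Rightarrow> nat) \<Rightarrow> (nat \<Rightarrow> nat) \<Rightarrow> int \<Rightarrow> int set" where
  "shortest_chain z w n =
     (if n \<le> 0 \<or> min (z (nat n)) (w (nat n)) = 0 then {n}
      else insert n (shortest_chain z w (n - int (min (z (nat n)) (w (nat n))))))"
  by auto
termination by (relation "Wellfounded.measure (\<lambda>(z, w, n). nat n)") auto

definition J_count :: "(nat \<Rightarrow> nat) \<Rightarrow> (nat \<Rightarrow> nat) \<Rightarrow> nat \<Rightarrow> nat" where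
  "J_count z w n =
     (\<Sum>m = 1..n. (if int m \<in> shortest_chain z w (int n) then 1 else 0)
                  * (if max (z m) (w m) \<ge> m then 1 else 0))"

end

theory Submission
  imports Defs
begin

(* Let r(t) = P(Z >= t), so that E Z = sum_t r(t) = oo and E min(Z, W) = sum_t r(t)^2 < oo.
   Whether m lies on S_n depends only on the edges out of m+1, ..., n, so it is independent of Z_m
   and E J_n >= sum_m P(m in S_n) r(m).
   Choose L with sum_{t>L} r(t)^2 <= 1/2. The chain jumps over every level a <= n, along an edge
   out of a vertex k that either lies in the window [a, a+L) or satisfies k >= a+L and has both
   outgoing edges longer than k - a; the latter has probability at most sum_{t>L} r(t)^2. Hence
   every window of length L meets S_n with expected count at least 1/2, and as r decreases,
   E J_n >= sum_j r((j+1)L) / 2, which diverges together with sum_t r(t). *)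

section \<open>Shortest-edge chains\<close>

declare shortest_chain.simps[simp del]

lemma shortest_chain_base:
  "n \<le> 0 \<or> min (z (nat n)) (w (nat n)) = 0 \<Longrightarrow> shortest_chain z w n = {n}"
  by (simp add: shortest_chain.simps[of z w n])

lemma shortest_chain_step:
  "0 < n \<Longrightarrow> 0 < min (z (nat n)) (w (nat n)) \<Longrightarrow>
    shortest_chain z w n = insert n (shortest_chain z w (n - int (min (z (nat n)) (w (nat n)))))"
  by (simp add: shortest_chain.simps[of z w n])

lemma shortest_chain_self: "n \<in> shortest_chain z w n"
  by (subst shortest_chain.simps) auto

lemma shortest_chain_le: "x \<in> shortest_chain z w n \<Longrightarrow> x \<le> n"
proof (induction z w n rule: shortest_chain.induct)
  case (1 z w n)
  then show ?case by (subst (asm) shortest_chain.simps) (auto split: if_splits)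
qed

lemma shortest_chain_cong:
  assumes "\<And>k. y < int k \<Longrightarrow> int k \<le> n \<Longrightarrow> z k = z' k \<and> w k = w' k"
  shows "y \<in> shortest_chain z w n \<longleftrightarrow> y \<in> shortest_chain z' w' n"
  using assms
proof (induction z w n rule: shortest_chain.induct)
  case (1 z w n)
  consider "n \<le> y" | "n \<le> 0" | "y < n" "0 < n" by linarith
  then show ?case
  proof cases
    case 1
    then show ?thesis
      using shortest_chain_le[of y] shortest_chain_self[of n] by force
  next
    case 2
    then show ?thesis by (simp add: shortest_chain_base)
  next
    case 3
    define d where "d = min (z (nat n)) (w (nat n))"
    have d': "d = min (z' (nat n)) (w' (nat n))"
      using 3 "1.prems"[of "nat n"] by (simp add: d_def)
    show ?thesis
    proof (cases "d = 0")
      case True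
      then show ?thesis using 3 d' by (simp add: shortest_chain_base d_def)
    next
      case False
      have agree: "\<And>k. y < int k \<Longrightarrow> int k \<le> n - int d \<Longrightarrow> z k = z' k \<and> w k = w' k"
        using "1.prems" by simp
      have "y \<in> shortest_chain z w (n - int d) \<longleftrightarrow> y \<in> shortest_chain z' w' (n - int d)"
        using "1.IH"[OF _ agree[unfolded d_def]] 3 False unfolding d_def by simp
      moreover have "shortest_chain z w n = insert n (shortest_chain z w (n - int d))"
        using 3 False unfolding d_def by (intro shortest_chain_step) simp_all
      moreover have "shortest_chain z' w' n = insert n (shortest_chain z' w' (n - int d))"
        using 3 False unfolding d' by (intro shortest_chain_step) simp_all
      ultimately show ?thesis using 3 by auto
    qed
  qed
qed

lemma shortest_chain_crossing:
  assumes "\<And>k. 1 \<le> k \<Longrightarrow> 1 \<le> z k \<and> 1 \<le> w k" "1 \<le> a" "a \<le> n"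
  shows "\<exists>x\<in>shortest_chain z w n. a \<le> x \<and> x - int (min (z (nat x)) (w (nat x))) < a"
  using assms
proof (induction z w n rule: shortest_chain.induct)
  case (1 z w n)
  define n' where "n' = n - int (min (z (nat n)) (w (nat n)))"
  have pos: "0 < min (z (nat n)) (w (nat n))"
    using "1.prems" by (simp add: Suc_le_eq)
  then have chain: "shortest_chain z w n = insert n (shortest_chain z w n')"
    using "1.prems" unfolding n'_def by (intro shortest_chain_step) simp_all
  show ?case
  proof (cases "n' < a")
    case True
    then show ?thesis
      using shortest_chain_self[of n z w] "1.prems"(3) unfolding n'_def by blast
  next
    case False
    have "\<exists>x\<in>shortest_chain z w n'. a \<le> x \<and> x - int (min (z (nat x)) (w (nat x))) < a"
      by (rule "1.IH"[folded n'_def]) (use pos "1.prems" False in auto)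
    then show ?thesis using chain by blast
  qed
qed

section \<open>Independence and tail sums\<close>

lemma Collect_PiE_in_sets_PiM_count_space:
  fixes P :: "('i \<Rightarrow> 'b::countable) \<Rightarrow> bool"
  assumes "finite J"
  shows "{f \<in> PiE J (\<lambda>_. UNIV). P f} \<in> sets (PiM J (\<lambda>_. count_space UNIV))"
proof -
  let ?S = "{f \<in> PiE J (\<lambda>_. UNIV). P f}"
  have "countable ?S"
    by (rule countable_subset[OF _ countable_PiE[OF assms]]) auto
  have "?S = (\<Union>f\<in>?S. {f})" by blast
  also have "\<dots> = (\<Union>f\<in>?S. PiE J (\<lambda>i. {f i}))"
    by (intro SUP_cong refl PiE_singleton[symmetric]) (auto simp: PiE_def)
  also have "\<dots> \<in> sets (PiM J (\<lambda>_. count_space UNIV))"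
    using \<open>countable ?S\<close> by (rule sets.countable_UN'') (auto intro!: sets_PiM_I_finite assms)
  finally show ?thesis .
qed

lemma (in prob_space) Collect_in_events_count_space:
  "X \<in> measurable M (count_space UNIV) \<Longrightarrow> {\<omega>\<in>space M. P (X \<omega>)} \<in> events"
  using measurable_sets[of X M "count_space UNIV" "{x. P x}"] by (simp add: vimage_def Int_def conj_commute)

lemma (in prob_space) indep_sets_reindex:
  assumes "inj_on f I" "indep_sets F (f ` I)"
  shows "indep_sets (F \<circ> f) I"
  unfolding indep_sets_def
proof (intro conjI ballI allI impI)
  show "(F \<circ> f) i \<subseteq> events" if "i \<in> I" for i
    using assms(2) that by (auto simp: indep_sets_def)
next
  fix J A assume J: "J \<subseteq> I" "J \<noteq> {}" "finite J" and A: "A \<in> Pi J (F \<circ> f)"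
  define A' where "A' = A \<circ> the_inv_into J f"
  have inj: "inj_on f J" using assms(1) J(1) by (rule inj_on_subset)
  have A'f: "A' (f j) = A j" if "j \<in> J" for j
    using the_inv_into_f_f[OF inj that] by (simp add: A'_def)
  have "A' \<in> Pi (f ` J) F" using A A'f by auto
  then have "prob (\<Inter>j\<in>f ` J. A' j) = (\<Prod>j\<in>f ` J. prob (A' j))"
    using assms(2)[unfolded indep_sets_def, THEN conjunct2, rule_format, of "f ` J" A'] J
    by auto
  moreover have "(\<Inter>j\<in>f ` J. A' j) = (\<Inter>j\<in>J. A j)" using A'f by auto
  moreover have "(\<Prod>j\<in>f ` J. prob (A' j)) = (\<Prod>j\<in>J. prob (A j))"
    using A'f by (simp add: prod.reindex[OF inj])
  ultimately show "prob (\<Inter>j\<in>J. A j) = (\<Prod>j\<in>J. prob (A j))" by simp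
qed

lemma (in prob_space) indep_vars_reindex:
  assumes "indep_vars M' X I" "inj_on f J" "f ` J \<subseteq> I"
  shows "indep_vars (M' \<circ> f) (X \<circ> f) J"
proof -
  have "indep_vars M' X (f ` J)" using assms(1,3) by (rule indep_vars_subset)
  with indep_sets_reindex[OF assms(2), of "\<lambda>i. {X i -` A \<inter> space M |A. A \<in> sets (M' i)}"]
  show ?thesis by (auto simp: indep_vars_def2 comp_def)
qed

lemma (in prob_space) restrict_event_in_events:
  fixes X :: "'i \<Rightarrow> 'a \<Rightarrow> 'b::countable"
  assumes "\<And>i. i \<in> J \<Longrightarrow> X i \<in> measurable M (count_space UNIV)" "finite J"
  shows "{\<omega>\<in>space M. P (restrict (\<lambda>i. X i \<omega>) J)} \<in> events"
proof -
  have "(\<lambda>\<omega>. restrict (\<lambda>i. X i \<omega>) J) \<in> measurable M (PiM J (\<lambda>_. count_space UNIV))"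
    using assms(1) by (rule measurable_restrict)
  from measurable_sets[OF this Collect_PiE_in_sets_PiM_count_space[OF assms(2), of P]]
  show ?thesis by (simp add: vimage_def Int_def conj_commute)
qed

lemma (in prob_space) prob_indep_vars_restrict_conj:
  fixes X :: "'i \<Rightarrow> 'a \<Rightarrow> 'b::countable"
  assumes "indep_vars (\<lambda>_. count_space UNIV) X I"
    and "J1 \<subseteq> I" "J2 \<subseteq> I" "J1 \<inter> J2 = {}" "finite J1" "finite J2"
  shows "prob {\<omega>\<in>space M. P (restrict (\<lambda>i. X i \<omega>) J1) \<and> Q (restrict (\<lambda>i. X i \<omega>) J2)}
       = prob {\<omega>\<in>space M. P (restrict (\<lambda>i. X i \<omega>) J1)} * prob {\<omega>\<in>space M. Q (restrict (\<lambda>i. X i \<omega>) J2)}"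
proof -
  have "indep_var (PiM J1 (\<lambda>_. count_space UNIV)) (\<lambda>\<omega>. restrict (\<lambda>i. X i \<omega>) J1)
                  (PiM J2 (\<lambda>_. count_space UNIV)) (\<lambda>\<omega>. restrict (\<lambda>i. X i \<omega>) J2)"
    using assms(1,4,2,3) by (rule indep_var_restrict)
  from indep_varD[OF this Collect_PiE_in_sets_PiM_count_space[OF assms(5)]
      Collect_PiE_in_sets_PiM_count_space[OF assms(6)]]
  show ?thesis by (simp add: vimage_def Int_def conj_commute conj_left_commute)
qed

lemma (in prob_space) prob_indep_vars_conj:
  fixes X :: "'i \<Rightarrow> 'a \<Rightarrow> 'b::countable"
  assumes "indep_vars (\<lambda>_. count_space UNIV) X I" "i \<in> I" "j \<in> I" "i \<noteq> j"
  shows "prob {\<omega>\<in>space M. P (X i \<omega>) \<and> Q (X j \<omega>)}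
       = prob {\<omega>\<in>space M. P (X i \<omega>)} * prob {\<omega>\<in>space M. Q (X j \<omega>)}"
  using prob_indep_vars_restrict_conj[OF assms(1), of "{i}" "{j}" "\<lambda>f. P (f i)" "\<lambda>f. Q (f j)"] assms(2-4)
  by simp

lemma (in prob_space) prob_eq_of_distr_eq:
  assumes "X \<in> measurable M (count_space UNIV)" "Y \<in> measurable M (count_space UNIV)"
    and "distr M (count_space UNIV) X = distr M (count_space UNIV) Y"
  shows "prob {\<omega>\<in>space M. P (X \<omega>)} = prob {\<omega>\<in>space M. P (Y \<omega>)}"
proof -
  have "prob {\<omega>\<in>space M. P (X \<omega>)} = measure (distr M (count_space UNIV) X) {x. P x}"
    using assms(1) by (subst measure_distr) (auto simp: vimage_def Int_def conj_commute)
  also have "\<dots> = prob {\<omega>\<in>space M. P (Y \<omega>)}"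
    using assms(2,3) by (subst assms(3), subst measure_distr) (auto simp: vimage_def Int_def conj_commute)
  finally show ?thesis .
qed

lemma nn_integral_of_nat_eq_suminf_tail:
  fixes f :: "'a \<Rightarrow> nat"
  assumes "\<And>t. {\<omega>\<in>space M. t \<le> f \<omega>} \<in> sets M"
  shows "(\<integral>\<^sup>+\<omega>. ennreal (real (f \<omega>)) \<partial>M) = (\<Sum>t. emeasure M {\<omega>\<in>space M. Suc t \<le> f \<omega>})"
proof -
  have "ennreal (real n) = (\<Sum>t. indicator {t. Suc t \<le> n} t)" for n :: nat
  proof -
    have "(\<Sum>t. indicator {t. Suc t \<le> n} t :: ennreal) = (\<Sum>t<n. indicator {t. Suc t \<le> n} t)"
      by (rule suminf_finite) auto
    also have "\<dots> = of_nat n" by (simp add: indicator_def Suc_le_eq)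
    finally show ?thesis by (simp add: ennreal_of_nat_eq_real_of_nat)
  qed
  then have "(\<integral>\<^sup>+\<omega>. ennreal (real (f \<omega>)) \<partial>M)
      = (\<integral>\<^sup>+\<omega>. (\<Sum>t. indicator {\<omega>\<in>space M. Suc t \<le> f \<omega>} \<omega>) \<partial>M)"
    by (intro nn_integral_cong) (simp add: indicator_def)
  also have "\<dots> = (\<Sum>t. emeasure M {\<omega>\<in>space M. Suc t \<le> f \<omega>})"
    using assms by (simp add: nn_integral_suminf)
  finally show ?thesis .
qed

lemma (in prob_space) summable_prob_ge_iff:
  fixes f :: "'a \<Rightarrow> nat"
  assumes "\<And>t. {\<omega>\<in>space M. t \<le> f \<omega>} \<in> events"
  shows "summable (\<lambda>t. prob {\<omega>\<in>space M. t \<le> f \<omega>}) \<longleftrightarrow> (\<integral>\<^sup>+\<omega>. ennreal (real (f \<omega>)) \<partial>M) < \<infinity>"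
proof -
  have "(\<integral>\<^sup>+\<omega>. ennreal (real (f \<omega>)) \<partial>M) = (\<Sum>t. ennreal (prob {\<omega>\<in>space M. Suc t \<le> f \<omega>}))"
    using assms by (simp add: nn_integral_of_nat_eq_suminf_tail emeasure_eq_measure)
  moreover have "summable (\<lambda>t. prob {\<omega>\<in>space M. Suc t \<le> f \<omega>}) \<longleftrightarrow>
      (\<Sum>t. ennreal (prob {\<omega>\<in>space M. Suc t \<le> f \<omega>})) \<noteq> \<infinity>"
    using ennreal_suminf_neq_top by (auto intro: summable_suminf_not_top)
  ultimately show ?thesis
    using summable_Suc_iff[of "\<lambda>t. prob {\<omega>\<in>space M. t \<le> f \<omega>}"] by (simp add: less_top)
qed

lemma (in prob_space) summable_sq_prob_ge_iff:
  fixes X :: "'i \<Rightarrow> 'a \<Rightarrow> nat"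
  assumes indep: "indep_vars (\<lambda>_. count_space UNIV) X I" "i \<in> I" "j \<in> I" "i \<noteq> j"
    and distr: "distr M (count_space UNIV) (X j) = distr M (count_space UNIV) (X i)"
  shows "summable (\<lambda>t. prob {\<omega>\<in>space M. t \<le> X i \<omega>} ^ 2) \<longleftrightarrow>
    (\<integral>\<^sup>+\<omega>. ennreal (real (min (X i \<omega>) (X j \<omega>))) \<partial>M) < \<infinity>"
proof -
  have meas: "X i \<in> measurable M (count_space UNIV)" "X j \<in> measurable M (count_space UNIV)"
    using indep(1-3) by (auto simp: indep_vars_def)
  have min_ge: "prob {\<omega>\<in>space M. t \<le> min (X i \<omega>) (X j \<omega>)} = prob {\<omega>\<in>space M. t \<le> X i \<omega>} ^ 2" for t
    using prob_indep_vars_conj[OF indep, of "\<lambda>x. t \<le> x" "\<lambda>x. t \<le> x"]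
      prob_eq_of_distr_eq[OF meas(2,1) distr, of "\<lambda>x. t \<le> x"]
    by (simp add: power2_eq_square)
  have "{\<omega>\<in>space M. t \<le> min (X i \<omega>) (X j \<omega>)} =
      {\<omega>\<in>space M. t \<le> X i \<omega>} \<inter> {\<omega>\<in>space M. t \<le> X j \<omega>}" for t
    by auto
  then have "{\<omega>\<in>space M. t \<le> min (X i \<omega>) (X j \<omega>)} \<in> events" for t
    using Collect_in_events_count_space[OF meas(1), of "\<lambda>x. t \<le> x"]
      Collect_in_events_count_space[OF meas(2), of "\<lambda>x. t \<le> x"] by simp
  from summable_prob_ge_iff[OF this, unfolded min_ge] show ?thesis .
qed

section \<open>Divergence of weighted sums\<close>

lemma eventually_tail_sums_le:
  fixes f :: "nat \<Rightarrow> real"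
  assumes "summable f" "\<And>t. 0 \<le> f t" "0 < e"
  shows "eventually (\<lambda>L. \<forall>n. (\<Sum>t\<in>{L<..n}. f t) \<le> e) sequentially"
proof -
  have "eventually (\<lambda>L. suminf f - e < (\<Sum>t<L. f t)) sequentially"
    using summable_LIMSEQ[OF assms(1)] by (rule order_tendstoD) (use assms(3) in simp)
  then show ?thesis
  proof (rule eventually_mono, intro allI)
    fix L n assume L: "suminf f - e < (\<Sum>t<L. f t)"
    have "(\<Sum>t<L. f t) + (\<Sum>t\<in>{L<..n}. f t) = (\<Sum>t\<in>{..<L} \<union> {L<..n}. f t)"
      by (rule sum.union_disjoint[symmetric]) auto
    also have "\<dots> \<le> suminf f"
      using assms(1,2) by (intro sum_le_suminf) auto
    finally show "(\<Sum>t\<in>{L<..n}. f t) \<le> e" using L by linarith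
  qed
qed

lemma partial_sums_tendsto_at_top:
  fixes f :: "nat \<Rightarrow> real"
  assumes "\<And>t. 0 \<le> f t" "\<not> summable f"
  shows "filterlim (\<lambda>n. \<Sum>t<n. f t) at_top sequentially"
  unfolding filterlim_at_top
proof
  fix c
  have "\<exists>K. c \<le> (\<Sum>t<K. f t)"
  proof (rule ccontr)
    assume "\<nexists>K. c \<le> (\<Sum>t<K. f t)"
    then have "summable f"
      using assms(1) by (intro summableI_nonneg_bounded[of f c]) (auto simp: not_le less_imp_le)
    with assms(2) show False by simp
  qed
  then obtain K where K: "c \<le> (\<Sum>t<K. f t)" ..
  have "c \<le> (\<Sum>t<n. f t)" if "K \<le> n" for n
    using K sum_mono2[of "{..<n}" "{..<K}" f] that assms(1) by fastforce
  then show "eventually (\<lambda>n. c \<le> (\<Sum>t<n. f t)) sequentially"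
    unfolding eventually_sequentially by blast
qed

lemma sum_le_block_sum_antimono:
  fixes r :: "nat \<Rightarrow> real"
  assumes "antimono r"
  shows "(\<Sum>t<(K+1)*L. r t) \<le> (\<Sum>t<L. r t) + L * (\<Sum>j<K. r ((j+1)*L))"
proof (induction K)
  case (Suc K)
  have "(\<Sum>t\<in>{(K+1)*L..<(K+1)*L+L}. r t) \<le> of_nat (card {(K+1)*L..<(K+1)*L+L}) * r ((K+1)*L)"
    by (rule sum_bounded_above) (auto intro: antimonoD[OF assms])
  then have "(\<Sum>t\<in>{(K+1)*L..<(K+1)*L+L}. r t) \<le> L * r ((K+1)*L)" by simp
  moreover have "(\<Sum>t<(Suc K+1)*L. r t) = (\<Sum>t<(K+1)*L. r t) + (\<Sum>t\<in>{(K+1)*L..<(K+1)*L+L}. r t)"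
    unfolding lessThan_atLeast0 by (subst sum.atLeastLessThan_concat) (auto simp: algebra_simps)
  ultimately show ?case using Suc.IH by (simp add: algebra_simps)
qed simp

lemma block_sum_le_weighted_sum:
  fixes r p :: "nat \<Rightarrow> real"
  assumes "antimono r" "\<And>t. 0 \<le> r t" "\<And>m. 0 \<le> p m"
    and window: "\<And>a. 1 \<le> a \<Longrightarrow> a + L \<le> n + 1 \<Longrightarrow> 1/2 \<le> (\<Sum>m\<in>{a..<a+L}. p m)"
  shows "(\<Sum>j<n div L. r ((j+1)*L)) / 2 \<le> (\<Sum>m\<in>{1..n}. p m * r m)"
proof -
  have blocks: "(\<Sum>j<K. r ((j+1)*L)) / 2 \<le> (\<Sum>m\<in>{1..<K*L+1}. p m * r m)" if "K*L \<le> n" for K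
    using that
  proof (induction K)
    case (Suc K)
    have "r ((K+1)*L) / 2 \<le> r ((K+1)*L) * (\<Sum>m\<in>{K*L+1..<K*L+1+L}. p m)"
      using mult_left_mono[OF window[of "K*L+1"] assms(2)] Suc.prems by simp
    also have "\<dots> \<le> (\<Sum>m\<in>{K*L+1..<K*L+1+L}. p m * r m)"
      unfolding sum_distrib_left
      by (intro sum_mono) (auto simp: mult.commute intro!: mult_left_mono antimonoD[OF assms(1)] assms(3))
    finally have "r ((K+1)*L) / 2 \<le> (\<Sum>m\<in>{K*L+1..<K*L+1+L}. p m * r m)" .
    moreover have "(\<Sum>m\<in>{1..<Suc K*L+1}. p m * r m) =
        (\<Sum>m\<in>{1..<K*L+1}. p m * r m) + (\<Sum>m\<in>{K*L+1..<K*L+1+L}. p m * r m)"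
      by (subst sum.atLeastLessThan_concat) (auto simp: algebra_simps)
    ultimately show ?case using Suc by (simp add: add_divide_distrib)
  qed simp
  have "{1..<n div L * L + 1} \<subseteq> {1..n}"
  proof
    fix x assume "x \<in> {1..<n div L * L + 1}"
    then show "x \<in> {1..n}"
      using order_trans[OF _ div_times_less_eq_dividend[of n L], of x] by simp
  qed
  then have "(\<Sum>m\<in>{1..<n div L * L + 1}. p m * r m) \<le> (\<Sum>m\<in>{1..n}. p m * r m)"
    using assms(2,3) by (intro sum_mono2) auto
  with blocks[of "n div L"] show ?thesis by (simp add: div_times_less_eq_dividend)
qed

lemma weighted_sum_tendsto_at_top:
  fixes r :: "nat \<Rightarrow> real" and p :: "nat \<Rightarrow> nat \<Rightarrow> real"
  assumes "antimono r" "\<And>t. 0 \<le> r t" "\<not> summable r" "\<And>n m. 0 \<le> p n m" "1 \<le> L"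
    and window: "\<And>n a. 1 \<le> a \<Longrightarrow> a + L \<le> n + 1 \<Longrightarrow> 1/2 \<le> (\<Sum>m\<in>{a..<a+L}. p n m)"
  shows "filterlim (\<lambda>n. \<Sum>m\<in>{1..n}. p n m * r m) at_top sequentially"
proof -
  define b where "b K = (\<Sum>j<K. r ((j+1)*L))" for K
  have "filterlim (\<lambda>K. (K+1)*L) sequentially sequentially"
    using assms(5) by (intro filterlim_subseq strict_monoI) simp
  with partial_sums_tendsto_at_top[OF assms(2,3)]
  have partial: "filterlim (\<lambda>K. \<Sum>t<(K+1)*L. r t) at_top sequentially"
    by (rule filterlim_compose)
  have "filterlim b at_top sequentially"
    unfolding filterlim_at_top
  proof
    fix c :: real
    have "eventually (\<lambda>K. L * c + (\<Sum>t<L. r t) \<le> (\<Sum>t<(K+1)*L. r t)) sequentially"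
      using partial by (simp add: filterlim_at_top)
    then show "eventually (\<lambda>K. c \<le> b K) sequentially"
    proof (rule eventually_mono)
      fix K assume "L * c + (\<Sum>t<L. r t) \<le> (\<Sum>t<(K+1)*L. r t)"
      then have "real L * c \<le> real L * b K"
        using sum_le_block_sum_antimono[OF assms(1), of K L] by (simp add: b_def)
      then show "c \<le> b K" using assms(5) by simp
    qed
  qed
  moreover have "filterlim (\<lambda>n. n div L) sequentially sequentially"
    unfolding filterlim_at_top eventually_sequentially
  proof (intro allI exI impI allI)
    fix Z n :: nat assume "Z * L \<le> n"
    then have "Z * L div L \<le> n div L" by (rule div_le_mono)
    then show "Z \<le> n div L" using assms(5) by simp
  qed
  ultimately have blocks: "filterlim (\<lambda>n. b (n div L)) at_top sequentially"
    by (rule filterlim_compose)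
  have "filterlim (\<lambda>n. 1/2 * b (n div L)) at_top sequentially"
    using filterlim_tendsto_pos_mult_at_top[OF tendsto_const _ blocks, of "1/2"] by simp
  then show ?thesis
  proof (rule filterlim_at_top_mono, intro always_eventually allI)
    fix n
    show "1/2 * b (n div L) \<le> (\<Sum>m\<in>{1..n}. p n m * r m)"
      using block_sum_le_weighted_sum[OF assms(1,2,4) window] by (simp add: b_def)
  qed
qed

section \<open>The shortest-edge model\<close>

definition chain_contains :: "nat \<Rightarrow> nat \<Rightarrow> (bool \<times> nat \<Rightarrow> nat) \<Rightarrow> bool" where
  "chain_contains n m e \<longleftrightarrow> int m \<in> shortest_chain (\<lambda>k. e (True, k)) (\<lambda>k. e (False, k)) (int n)"

lemma chain_contains_restrict:
  "chain_contains n m (restrict e (UNIV \<times> {m<..n})) \<longleftrightarrow> chain_contains n m e"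
  unfolding chain_contains_def by (rule shortest_chain_cong) auto

locale shortest_edge_model = prob_space M for M :: "'a measure" +
  fixes Zs Ws :: "nat \<Rightarrow> 'a \<Rightarrow> nat" and r :: "nat \<Rightarrow> real"
  assumes indep_edges:
      "indep_vars (\<lambda>_. count_space UNIV) (\<lambda>(b, k). if b then Zs k else Ws k) (UNIV \<times> {1..})"
    and Zs_pos: "\<And>k \<omega>. 1 \<le> k \<Longrightarrow> \<omega> \<in> space M \<Longrightarrow> 1 \<le> Zs k \<omega>"
    and Ws_pos: "\<And>k \<omega>. 1 \<le> k \<Longrightarrow> \<omega> \<in> space M \<Longrightarrow> 1 \<le> Ws k \<omega>"
    and prob_Zs_ge: "\<And>k t. 1 \<le> k \<Longrightarrow> prob {\<omega> \<in> space M. t \<le> Zs k \<omega>} = r t"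
    and prob_Ws_ge: "\<And>k t. 1 \<le> k \<Longrightarrow> prob {\<omega> \<in> space M. t \<le> Ws k \<omega>} = r t"
begin

abbreviation edge :: "bool \<times> nat \<Rightarrow> 'a \<Rightarrow> nat" where
  "edge \<equiv> \<lambda>(b, k). if b then Zs k else Ws k"

definition in_chain :: "nat \<Rightarrow> nat \<Rightarrow> 'a set" where
  "in_chain n m = {\<omega> \<in> space M. chain_contains n m (\<lambda>i. edge i \<omega>)}"

lemma edge_measurable: "1 \<le> k \<Longrightarrow> edge (b, k) \<in> measurable M (count_space UNIV)"
  using indep_edges by (auto simp: indep_vars_def)

lemma Zs_measurable: "1 \<le> k \<Longrightarrow> Zs k \<in> measurable M (count_space UNIV)"
  using edge_measurable[of k True] by simp

lemma Ws_measurable: "1 \<le> k \<Longrightarrow> Ws k \<in> measurable M (count_space UNIV)"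
  using edge_measurable[of k False] by simp

lemma Zs_ge_in_events: "1 \<le> k \<Longrightarrow> {\<omega> \<in> space M. t \<le> Zs k \<omega>} \<in> events"
  by (rule Collect_in_events_count_space[OF Zs_measurable])

lemma Ws_ge_in_events: "1 \<le> k \<Longrightarrow> {\<omega> \<in> space M. t \<le> Ws k \<omega>} \<in> events"
  by (rule Collect_in_events_count_space[OF Ws_measurable])

lemma r_nonneg: "0 \<le> r t"
  using prob_Zs_ge[of 1 t, symmetric] by simp

lemma antimono_r: "antimono r"
proof (rule antimonoI)
  fix t t' :: nat assume "t \<le> t'"
  then have "prob {\<omega> \<in> space M. t' \<le> Zs 1 \<omega>} \<le> prob {\<omega> \<in> space M. t \<le> Zs 1 \<omega>}"
    by (intro finite_measure_mono Zs_ge_in_events) auto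
  then show "r t' \<le> r t" using prob_Zs_ge by simp
qed

lemma prob_Zs_Ws_ge: "1 \<le> k \<Longrightarrow> prob {\<omega> \<in> space M. t \<le> Zs k \<omega> \<and> t \<le> Ws k \<omega>} = r t ^ 2"
  using prob_indep_vars_conj[OF indep_edges, of "(True, k)" "(False, k)" "\<lambda>x. t \<le> x" "\<lambda>x. t \<le> x"]
  by (simp add: prob_Zs_ge prob_Ws_ge power2_eq_square)

lemma in_chain_eq_restrict:
  "in_chain n m = {\<omega> \<in> space M. chain_contains n m (restrict (\<lambda>i. edge i \<omega>) (UNIV \<times> {m<..n}))}"
  by (simp add: in_chain_def chain_contains_restrict)

lemma in_chain_in_events: "in_chain n m \<in> events"
  unfolding in_chain_eq_restrict
  by (rule restrict_event_in_events) (auto intro!: Zs_measurable Ws_measurable)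

lemma prob_in_chain_Zs_ge:
  assumes "1 \<le> m"
  shows "prob (in_chain n m \<inter> {\<omega> \<in> space M. m \<le> Zs m \<omega>}) = prob (in_chain n m) * r m"
proof -
  have "prob {\<omega> \<in> space M. chain_contains n m (restrict (\<lambda>i. edge i \<omega>) (UNIV \<times> {m<..n})) \<and>
        m \<le> restrict (\<lambda>i. edge i \<omega>) {(True, m)} (True, m)} =
      prob {\<omega> \<in> space M. chain_contains n m (restrict (\<lambda>i. edge i \<omega>) (UNIV \<times> {m<..n}))} *
      prob {\<omega> \<in> space M. m \<le> restrict (\<lambda>i. edge i \<omega>) {(True, m)} (True, m)}"
    using assms by (intro prob_indep_vars_restrict_conj[OF indep_edges, where Q = "\<lambda>e. m \<le> e (True, m)"]) auto
  moreover have "in_chain n m \<inter> {\<omega> \<in> space M. m \<le> Zs m \<omega>} =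
      {\<omega> \<in> space M. chain_contains n m (restrict (\<lambda>i. edge i \<omega>) (UNIV \<times> {m<..n})) \<and> m \<le> Zs m \<omega>}"
    unfolding in_chain_eq_restrict by blast
  ultimately show ?thesis
    using assms by (simp add: in_chain_eq_restrict prob_Zs_ge)
qed

lemma in_chain_window_or_long_edges:
  assumes "1 \<le> a" "a \<le> n" "\<omega> \<in> space M"
  shows "(\<exists>m\<in>{a..<a+L}. \<omega> \<in> in_chain n m) \<or>
    (\<exists>k\<in>{a+L..n}. k + 1 - a \<le> Zs k \<omega> \<and> k + 1 - a \<le> Ws k \<omega>)"
proof -
  have pos: "\<And>k. 1 \<le> k \<Longrightarrow> 1 \<le> Zs k \<omega> \<and> 1 \<le> Ws k \<omega>"
    using Zs_pos Ws_pos assms(3) by blast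
  from shortest_chain_crossing[where z = "\<lambda>k. Zs k \<omega>" and w = "\<lambda>k. Ws k \<omega>"
      and a = "int a" and n = "int n", OF pos] assms(1,2)
  obtain x where x: "x \<in> shortest_chain (\<lambda>k. Zs k \<omega>) (\<lambda>k. Ws k \<omega>) (int n)" "int a \<le> x"
      "x - int (min (Zs (nat x) \<omega>) (Ws (nat x) \<omega>)) < int a"
    by auto
  define k where "k = nat x"
  have xk: "x = int k" and ak: "a \<le> k" using x(2) by (auto simp: k_def)
  have "k \<le> n" using shortest_chain_le[OF x(1)] xk by simp
  show ?thesis
  proof (cases "k < a + L")
    case True
    then have "\<omega> \<in> in_chain n k"
      using x(1) xk assms(3) by (simp add: in_chain_def chain_contains_def)
    then show ?thesis using True ak by auto
  next
    case False
    have "int k - int (min (Zs k \<omega>) (Ws k \<omega>)) < int a" using x(3) xk by simp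
    then have "k + 1 - a \<le> min (Zs k \<omega>) (Ws k \<omega>)" by arith
    then show ?thesis using False \<open>k \<le> n\<close> by auto
  qed
qed

lemma in_chain_window_prob:
  assumes "1 \<le> a" "a \<le> n"
  shows "1 \<le> (\<Sum>m\<in>{a..<a+L}. prob (in_chain n m)) + (\<Sum>t\<in>{L<..n}. r t ^ 2)"
proof -
  define D where "D k = {\<omega> \<in> space M. k + 1 - a \<le> Zs k \<omega> \<and> k + 1 - a \<le> Ws k \<omega>}" for k
  have D_events: "D k \<in> events" if "k \<in> {a+L..n}" for k
  proof -
    have "D k = {\<omega> \<in> space M. k + 1 - a \<le> Zs k \<omega>} \<inter> {\<omega> \<in> space M. k + 1 - a \<le> Ws k \<omega>}"
      by (auto simp: D_def)
    then show ?thesis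
      using that assms(1) by (auto intro!: sets.Int Zs_ge_in_events Ws_ge_in_events)
  qed
  have "space M \<subseteq> (\<Union>m\<in>{a..<a+L}. in_chain n m) \<union> (\<Union>k\<in>{a+L..n}. D k)"
  proof
    fix \<omega> assume "\<omega> \<in> space M"
    with in_chain_window_or_long_edges[OF assms this, where L = L]
    show "\<omega> \<in> (\<Union>m\<in>{a..<a+L}. in_chain n m) \<union> (\<Union>k\<in>{a+L..n}. D k)"
      by (auto simp: D_def)
  qed
  then have "1 \<le> prob ((\<Union>m\<in>{a..<a+L}. in_chain n m) \<union> (\<Union>k\<in>{a+L..n}. D k))"
    using in_chain_in_events D_events by (subst prob_space[symmetric], intro finite_measure_mono) auto
  also have "\<dots> \<le> (\<Sum>m\<in>{a..<a+L}. prob (in_chain n m)) + (\<Sum>k\<in>{a+L..n}. prob (D k))"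
    using in_chain_in_events D_events
    by (intro order_trans[OF measure_Un_le] add_mono measure_UNION_le) auto
  also have "(\<Sum>k\<in>{a+L..n}. prob (D k)) = (\<Sum>k\<in>{a+L..n}. r (k + 1 - a) ^ 2)"
    using assms(1) by (intro sum.cong) (auto simp: D_def prob_Zs_Ws_ge)
  also have "\<dots> = (\<Sum>t\<in>(\<lambda>k. k + 1 - a) ` {a+L..n}. r t ^ 2)"
    by (rule sum.reindex[symmetric, unfolded comp_def]) (auto simp: inj_on_def)
  also have "\<dots> \<le> (\<Sum>t\<in>{L<..n}. r t ^ 2)"
    using assms(1) by (intro sum_mono2) auto
  finally show ?thesis by simp
qed

lemma max_edges_ge_in_events:
  assumes "1 \<le> m"
  shows "{\<omega> \<in> space M. t \<le> max (Zs m \<omega>) (Ws m \<omega>)} \<in> events"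
proof -
  have "{\<omega> \<in> space M. t \<le> max (Zs m \<omega>) (Ws m \<omega>)} =
      {\<omega> \<in> space M. t \<le> Zs m \<omega>} \<union> {\<omega> \<in> space M. t \<le> Ws m \<omega>}"
    by (auto simp: le_max_iff_disj)
  then show ?thesis
    using assms by (auto intro!: sets.Un Zs_ge_in_events Ws_ge_in_events)
qed

lemma expectation_J_count:
  "expectation (\<lambda>\<omega>. real (J_count (\<lambda>m. Zs m \<omega>) (\<lambda>m. Ws m \<omega>) n)) =
    (\<Sum>m\<in>{1..n}. prob (in_chain n m \<inter> {\<omega> \<in> space M. m \<le> max (Zs m \<omega>) (Ws m \<omega>)}))"
proof -
  define B where "B m = {\<omega> \<in> space M. m \<le> max (Zs m \<omega>) (Ws m \<omega>)}" for m
  have "expectation (\<lambda>\<omega>. real (J_count (\<lambda>m. Zs m \<omega>) (\<lambda>m. Ws m \<omega>) n))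
      = expectation (\<lambda>\<omega>. \<Sum>m\<in>{1..n}. indicator (in_chain n m \<inter> B m) \<omega>)"
    unfolding J_count_def of_nat_sum
    by (intro Bochner_Integration.integral_cong refl sum.cong)
      (auto simp: in_chain_def chain_contains_def B_def indicator_def)
  also have "\<dots> = (\<Sum>m\<in>{1..n}. prob (in_chain n m \<inter> B m))"
    using in_chain_in_events max_edges_ge_in_events
    by (subst Bochner_Integration.integral_sum)
      (auto simp: B_def integrable_indicator_iff Int_absorb2 sets.sets_into_space less_top[symmetric]
        intro!: sum.cong)
  finally show ?thesis by (simp add: B_def)
qed

lemma weighted_in_chain_le_expectation_J_count:
  "(\<Sum>m\<in>{1..n}. prob (in_chain n m) * r m) \<le>
    expectation (\<lambda>\<omega>. real (J_count (\<lambda>m. Zs m \<omega>) (\<lambda>m. Ws m \<omega>) n))"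
  unfolding expectation_J_count
proof (rule sum_mono)
  fix m assume "m \<in> {1..n}"
  then have "prob (in_chain n m) * r m = prob (in_chain n m \<inter> {\<omega> \<in> space M. m \<le> Zs m \<omega>})"
    by (simp add: prob_in_chain_Zs_ge)
  also have "\<dots> \<le> prob (in_chain n m \<inter> {\<omega> \<in> space M. m \<le> max (Zs m \<omega>) (Ws m \<omega>)})"
    using \<open>m \<in> {1..n}\<close>
    by (intro finite_measure_mono sets.Int in_chain_in_events max_edges_ge_in_events) auto
  finally show "prob (in_chain n m) * r m \<le> \<dots>" .
qed

theorem expectation_J_count_tendsto_at_top:
  assumes "\<not> summable r" "summable (\<lambda>t. r t ^ 2)"
  shows "filterlim (\<lambda>n. expectation (\<lambda>\<omega>. real (J_count (\<lambda>m. Zs m \<omega>) (\<lambda>m. Ws m \<omega>) n)))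
           at_top sequentially"
proof -
  have "eventually (\<lambda>L. 1 \<le> L \<and> (\<forall>n. (\<Sum>t\<in>{L<..n}. r t ^ 2) \<le> 1/2)) sequentially"
    using eventually_ge_at_top[of 1] eventually_tail_sums_le[OF assms(2), of "1/2"]
    by (auto intro: eventually_conj)
  then obtain L where L: "1 \<le> L" and tail: "\<And>n. (\<Sum>t\<in>{L<..n}. r t ^ 2) \<le> 1/2"
    by (auto simp: eventually_sequentially)
  have window: "1/2 \<le> (\<Sum>m\<in>{a..<a+L}. prob (in_chain n m))" if "1 \<le> a" "a + L \<le> n + 1" for n a
    using in_chain_window_prob[of a n L] tail[of n] that L by linarith
  have "filterlim (\<lambda>n. \<Sum>m\<in>{1..n}. prob (in_chain n m) * r m) at_top sequentially"
    using antimono_r r_nonneg assms(1) measure_nonneg L window by (rule weighted_sum_tendsto_at_top)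
  then show ?thesis
    by (rule filterlim_at_top_mono) (intro always_eventually allI weighted_in_chain_le_expectation_J_count)
qed

end

lemma (in prob_space) shortest_edge_model_of_identically_distributed:
  assumes indep: "indep_vars (\<lambda>_. count_space UNIV) (\<lambda>(b, k). if b then Zs k else Ws k) (UNIV \<times> {1..})"
    and measZ: "Z \<in> measurable M (count_space UNIV)"
    and distZs: "\<And>k. 1 \<le> k \<Longrightarrow> distr M (count_space UNIV) (Zs k) = distr M (count_space UNIV) Z"
    and distWs: "\<And>k. 1 \<le> k \<Longrightarrow> distr M (count_space UNIV) (Ws k) = distr M (count_space UNIV) Z"
    and "\<And>k \<omega>. 1 \<le> k \<Longrightarrow> \<omega> \<in> space M \<Longrightarrow> 1 \<le> Zs k \<omega>"
    and "\<And>k \<omega>. 1 \<le> k \<Longrightarrow> \<omega> \<in> space M \<Longrightarrow> 1 \<le> Ws k \<omega>"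
  shows "shortest_edge_model M Zs Ws (\<lambda>t. prob {\<omega> \<in> space M. t \<le> Z \<omega>})"
proof
  fix k t :: nat assume k: "1 \<le> k"
  have "(if b then Zs k else Ws k) \<in> measurable M (count_space UNIV)" for b
    using indep k by (auto simp: indep_vars_def)
  from this[of True] this[of False]
  show "prob {\<omega> \<in> space M. t \<le> Zs k \<omega>} = prob {\<omega> \<in> space M. t \<le> Z \<omega>}"
    "prob {\<omega> \<in> space M. t \<le> Ws k \<omega>} = prob {\<omega> \<in> space M. t \<le> Z \<omega>}"
    using prob_eq_of_distr_eq measZ distZs[OF k] distWs[OF k] by simp_all
qed (use assms in auto)

theorem mainTheorem9:
  fixes M :: "'a measure"
    and Z W :: "'a \<Rightarrow> nat"
    and Zs Ws :: "nat \<Rightarrow> 'a \<Rightarrow> nat"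
  assumes "prob_space M"
    and indep: "prob_space.indep_vars M (\<lambda>_. count_space UNIV)
          (\<lambda>i. case i of None \<Rightarrow> Z | Some None \<Rightarrow> W
                 | Some (Some (True, n)) \<Rightarrow> Zs n | Some (Some (False, n)) \<Rightarrow> Ws n)
          ({None, Some None} \<union> Some ` Some ` (UNIV \<times> {1..}))"
    and distW: "distr M (count_space UNIV) W = distr M (count_space UNIV) Z"
    and distZs: "\<And>n. n \<ge> 1 \<Longrightarrow> distr M (count_space UNIV) (Zs n) = distr M (count_space UNIV) Z"
    and distWs: "\<And>n. n \<ge> 1 \<Longrightarrow> distr M (count_space UNIV) (Ws n) = distr M (count_space UNIV) Z"
    and posZ: "\<And>\<omega>. \<omega> \<in> space M \<Longrightarrow> Z \<omega> \<ge> 1"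
    and posW: "\<And>\<omega>. \<omega> \<in> space M \<Longrightarrow> W \<omega> \<ge> 1"
    and posZs: "\<And>n \<omega>. n \<ge> 1 \<Longrightarrow> \<omega> \<in> space M \<Longrightarrow> Zs n \<omega> \<ge> 1"
    and posWs: "\<And>n \<omega>. n \<ge> 1 \<Longrightarrow> \<omega> \<in> space M \<Longrightarrow> Ws n \<omega> \<ge> 1"
    and aperiodic: "Gcd {k. measure M {\<omega> \<in> space M. Z \<omega> = k} > 0} = 1"
    and infinite_mean: "(\<integral>\<^sup>+ \<omega>. ennreal (real (Z \<omega>)) \<partial>M) = \<infinity>"
    and finite_min_mean: "(\<integral>\<^sup>+ \<omega>. ennreal (real (min (Z \<omega>) (W \<omega>))) \<partial>M) < \<infinity>"
  shows "filterlim
           (\<lambda>n. prob_space.expectation M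
                  (\<lambda>\<omega>. real (J_count (\<lambda>m. Zs m \<omega>) (\<lambda>m. Ws m \<omega>) n)))
           at_top sequentially"
proof -
  interpret prob_space M by fact
  define X where "X = (\<lambda>i. case i of None \<Rightarrow> Z | Some None \<Rightarrow> W
      | Some (Some (True, n)) \<Rightarrow> Zs n | Some (Some (False, n)) \<Rightarrow> Ws n)"
  define I :: "(bool \<times> nat) option option set"
    where "I = {None, Some None} \<union> Some ` Some ` (UNIV \<times> {1..})"
  have indep_X: "indep_vars (\<lambda>_. count_space UNIV) X I"
    using indep unfolding X_def I_def .
  have measZ: "Z \<in> measurable M (count_space UNIV)"
    using indep_X by (auto simp: indep_vars_def X_def I_def)
  have "indep_vars ((\<lambda>_. count_space UNIV) \<circ> (Some \<circ> Some)) (X \<circ> (Some \<circ> Some)) (UNIV \<times> {1..})"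
    using indep_X by (rule indep_vars_reindex) (auto simp: inj_on_def I_def)
  then have edges: "indep_vars (\<lambda>_. count_space UNIV) (\<lambda>(b, k). if b then Zs k else Ws k) (UNIV \<times> {1..})"
    by (rule indep_vars_cong[THEN iffD1, rotated 3]) (auto simp: X_def)
  interpret shortest_edge_model M Zs Ws "\<lambda>t. prob {\<omega> \<in> space M. t \<le> Z \<omega>}"
    using edges measZ distZs distWs posZs posWs by (rule shortest_edge_model_of_identically_distributed)
  show ?thesis
  proof (rule expectation_J_count_tendsto_at_top)
    show "\<not> summable (\<lambda>t. prob {\<omega> \<in> space M. t \<le> Z \<omega>})"
      using summable_prob_ge_iff[of Z, OF Collect_in_events_count_space[OF measZ]] infinite_mean by simp
    show "summable (\<lambda>t. prob {\<omega> \<in> space M. t \<le> Z \<omega>} ^ 2)"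
      using summable_sq_prob_ge_iff[OF indep_X, of None "Some None"] distW finite_min_mean
      by (simp add: X_def I_def)
  qed
qed

end
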